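(* Fix an integer $k\geq1$ and $V=\{0,\ldots,k\}$. Let $\varphi$ be a Boolean function on $V$ and let $\nu\neq\nu'$ be two valuations such that there is a simple path $\nu=\nu_0-\nu_1-\cdots-\nu_{n+1}=\nu'$ in $\mathbf G_V$ with $n\geq0$ and $\nu_i\notin\mathrm{sat}(\varphi)$ for all $1\leq i\leq n$. Then: (Chainkilling) if $(-1)^{|\nu|}\neq(-1)^{|\nu'|}$ (i.e., $n$ is even) and $\{\nu,\nu'\}\subseteq\mathrm{sat}(\varphi)$, then, defining $\varphi'$ by $\mathrm{sat}(\varphi')=\mathrm{sat}(\varphi)\setminus\{\nu,\nu'\}$, we have $\varphi\simeq\varphi'$ (more precisely $\varphi$ can be transformed into $\varphi'$ by a finite sequence of $\xrightarrow{\pm}$ steps); (Chainswapping) if $(-1)^{|\nu|}=(-1)^{|\nu'|}$ (i.e., $n$ is odd), $\nu\in\mathrm{sat}(\varphi)$ and $\nu'\notin\mathrm{sat}(\varphi)$, then, defining $\varphi'$ by $\mathrm{sat}(\varphi')=(\mathrm{sat}(\varphi)\setminus\{\nu\})\cup\{\nu'\}$, $\varphi$ can be transformed into $\varphi'$ by a finite sequence of $\xrightarrow{\pm}$ steps.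
   Context: A valuation is a subset $\nu\subseteq V$; $\nu^{(l)}$ is $\nu$ with membership of $l$ flipped. A Boolean function on $V$ is a map $\varphi:2^V\to\{\text{false},\text{true}\}$; $\mathrm{sat}(\varphi)$ is its set of satisfying valuations. $\mathbf G_V$ is the undirected graph with vertex set $2^V$ and edges $\{\nu,\nu^{(l)}\}$ for $\nu\subseteq V$, $l\in V$. Write $\varphi\xrightarrow{+(\nu,l)}\varphi'$ if $\nu,\nu^{(l)}\notin\mathrm{sat}(\varphi)$ and $\mathrm{sat}(\varphi')=\mathrm{sat}(\varphi)\cup\{\nu,\nu^{(l)}\}$, and $\varphi\xrightarrow{-(\nu,l)}\varphi'$ if $\varphi'\xrightarrow{+(\nu,l)}\varphi$. Write $\varphi\xrightarrow{\pm}\varphi'$ if one of these holds for some $\nu,l$; $\simeq$ is the reflexive-transitive closure of $\xrightarrow{\pm}$. *)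

theory Defs
  imports Main
begin

text \<open>Valuations are sets of variables (naturals); a Boolean function is a predicate
  on valuations, only its values on subsets of V matter.\<close>

definition flip :: "nat set \<Rightarrow> nat \<Rightarrow> nat set" where
  "flip \<nu> l = (if l \<in> \<nu> then \<nu> - {l} else insert l \<nu>)"

definition sat :: "nat set \<Rightarrow> (nat set \<Rightarrow> bool) \<Rightarrow> nat set set" where
  "sat V \<phi> = {\<nu>. \<nu> \<subseteq> V \<and> \<phi> \<nu>}"

definition cube_edge :: "nat set \<Rightarrow> nat set \<Rightarrow> nat set \<Rightarrow> bool" where
  "cube_edge V a b \<longleftrightarrow> a \<subseteq> V \<and> (\<exists>l\<in>V. b = flip a l)"

definition plus_step :: "nat set \<Rightarrow> nat set \<Rightarrow> nat \<Rightarrow> (nat set \<Rightarrow> bool) \<Rightarrow> (nat set \<Rightarrow> bool) \<Rightarrow> bool" where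
  "plus_step V \<nu> l \<phi> \<phi>' \<longleftrightarrow> \<nu> \<subseteq> V \<and> l \<in> V \<and>
     \<nu> \<notin> sat V \<phi> \<and> flip \<nu> l \<notin> sat V \<phi> \<and>
     sat V \<phi>' = sat V \<phi> \<union> {\<nu>, flip \<nu> l}"

definition minus_step :: "nat set \<Rightarrow> nat set \<Rightarrow> nat \<Rightarrow> (nat set \<Rightarrow> bool) \<Rightarrow> (nat set \<Rightarrow> bool) \<Rightarrow> bool" where
  "minus_step V \<nu> l \<phi> \<phi>' \<longleftrightarrow> plus_step V \<nu> l \<phi>' \<phi>"

definition pm_step :: "nat set \<Rightarrow> (nat set \<Rightarrow> bool) \<Rightarrow> (nat set \<Rightarrow> bool) \<Rightarrow> bool" where
  "pm_step V \<phi> \<phi>' \<longleftrightarrow> (\<exists>\<nu> l. plus_step V \<nu> l \<phi> \<phi>' \<or> minus_step V \<nu> l \<phi> \<phi>')"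

abbreviation equiv_bf :: "nat set \<Rightarrow> (nat set \<Rightarrow> bool) \<Rightarrow> (nat set \<Rightarrow> bool) \<Rightarrow> bool" where
  "equiv_bf V \<equiv> (pm_step V)\<^sup>*\<^sup>*"

definition simple_path :: "nat set \<Rightarrow> nat set list \<Rightarrow> bool" where
  "simple_path V p \<longleftrightarrow> distinct p \<and> (\<forall>i. Suc i < length p \<longrightarrow> cube_edge V (p ! i) (p ! Suc i))"

end

theory Submission
  imports Defs
begin

text \<open>A satisfying valuation \<open>a\<close> followed by two non-satisfying neighbours \<open>a - b - c\<close>
  can be moved to \<open>c\<close>: first add the edge \<open>{b, c}\<close>, then remove the edge \<open>{a, b}\<close>.
  Iterating this along the path moves \<open>\<nu>\<close> two steps at a time. If \<open>n\<close> is odd, this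
  carries \<open>\<nu>\<close> onto \<open>\<nu>'\<close>; if \<open>n\<close> is even, it carries \<open>\<nu>\<close> to \<open>\<nu>\<^sub>n\<close>, and the edge
  \<open>{\<nu>\<^sub>n, \<nu>'}\<close> can then be removed. Since every edge flips one variable, the parity of
  \<open>|\<nu>\<^sub>i|\<close> alternates along the path, which turns the sign conditions into the parity
  of \<open>n\<close>.\<close>

lemma flip_neq: "flip a l \<noteq> a"
  unfolding flip_def by auto

lemma even_card_flip:
  assumes "finite a"
  shows "even (card (flip a l)) \<longleftrightarrow> odd (card a)"
  using assms unfolding flip_def by (cases "card a") (auto simp: card_gt_0_iff)

lemma sat_subset_Pow: "sat V \<phi> \<subseteq> Pow V"
  unfolding sat_def by auto

lemma sat_mem: "A \<subseteq> Pow V \<Longrightarrow> sat V (\<lambda>\<mu>. \<mu> \<in> A) = A"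
  unfolding sat_def by auto

lemma cube_edge_subset:
  assumes "cube_edge V a b"
  shows "a \<subseteq> V" "b \<subseteq> V"
  using assms unfolding cube_edge_def flip_def by (auto split: if_splits)

lemma cube_edge_neq: "cube_edge V a b \<Longrightarrow> a \<noteq> b"
  unfolding cube_edge_def using flip_neq by metis

lemma even_card_cube_edge:
  assumes "cube_edge V a b" "finite V"
  shows "even (card b) \<longleftrightarrow> odd (card a)"
  using assms even_card_flip finite_subset unfolding cube_edge_def by metis

lemma even_card_last_path:
  assumes "successively (cube_edge V) (a # xs)" "finite V"
  shows "even (card (last (a # xs))) \<longleftrightarrow> even (card a + length xs)"
  using assms(1)
proof (induction xs arbitrary: a)
  case (Cons b xs)
  then show ?case
    using even_card_cube_edge[OF _ assms(2), of a b] by auto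
qed simp

lemma neg_one_power_card_path_ends:
  assumes "successively (cube_edge V) (a # xs @ [b])" "finite V"
  shows "(-1::int) ^ card a = (-1) ^ card b \<longleftrightarrow> odd (length xs)"
proof -
  have "even (card b) \<longleftrightarrow> even (card a + length (xs @ [b]))"
    using even_card_last_path[OF assms] by simp
  then show ?thesis
    by (auto simp: minus_one_power_iff)
qed

lemma path_last_subset:
  assumes "successively (cube_edge V) (a # xs @ [b])"
  shows "b \<subseteq> V"
proof -
  have "successively (cube_edge V) ((a # xs) @ [b])"
    using assms by simp
  then have "cube_edge V (last (a # xs)) b"
    unfolding successively_append_iff by simp
  then show ?thesis
    by (rule cube_edge_subset(2))
qed

lemma list_eq_hd_take_tl_last:
  assumes "length p = n + 2"
  shows "p = p ! 0 # take n (tl p) @ [p ! (n + 1)]"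
  using assms by (intro nth_equalityI) (auto simp: nth_append nth_Cons' nth_tl min_def less_Suc_eq)

lemma successively_iff_nth:
  "successively P xs \<longleftrightarrow> (\<forall>i. Suc i < length xs \<longrightarrow> P (xs ! i) (xs ! Suc i))"
proof (induction P xs rule: successively.induct)
  case (3 P x y xs)
  then show ?case
    by (auto simp: nth_Cons split: nat.split)
qed auto

lemma simple_path_iff: "simple_path V p \<longleftrightarrow> distinct p \<and> successively (cube_edge V) p"
  unfolding simple_path_def successively_iff_nth ..

lemma pm_step_add_edge:
  assumes "cube_edge V a b" "a \<notin> sat V \<phi>" "b \<notin> sat V \<phi>" "sat V \<psi> = sat V \<phi> \<union> {a, b}"
  shows "pm_step V \<phi> \<psi>"
  using assms unfolding pm_step_def plus_step_def cube_edge_def by blast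

lemma pm_step_remove_edge:
  assumes "cube_edge V a b" "a \<in> sat V \<phi>" "b \<in> sat V \<phi>" "sat V \<psi> = sat V \<phi> - {a, b}"
  shows "pm_step V \<phi> \<psi>"
proof -
  obtain l where "a \<subseteq> V" "l \<in> V" "b = flip a l"
    using assms(1) unfolding cube_edge_def by blast
  moreover have "sat V \<phi> = sat V \<psi> \<union> {a, b}"
    using assms(2-4) by blast
  ultimately have "plus_step V a l \<psi> \<phi>"
    unfolding plus_step_def using assms(4) by simp
  then show ?thesis
    unfolding pm_step_def minus_step_def by blast
qed

lemma equiv_bf_shift_two_edges:
  assumes ab: "cube_edge V a b" and bc: "cube_edge V b c" and "a \<noteq> c"
    and a: "a \<in> sat V \<phi>" and b: "b \<notin> sat V \<phi>" and c: "c \<notin> sat V \<phi>"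
    and \<psi>: "sat V \<psi> = sat V \<phi> - {a} \<union> {c}"
  shows "equiv_bf V \<phi> \<psi>"
proof -
  define \<chi> where "\<chi> \<mu> \<longleftrightarrow> \<mu> \<in> sat V \<phi> \<union> {b, c}" for \<mu>
  have sat_\<chi>: "sat V \<chi> = sat V \<phi> \<union> {b, c}"
    unfolding \<chi>_def using sat_subset_Pow[of V \<phi>] cube_edge_subset[OF bc] by (intro sat_mem) auto
  have "pm_step V \<phi> \<chi>"
    by (rule pm_step_add_edge[OF bc b c sat_\<chi>])
  moreover have "pm_step V \<chi> \<psi>"
  proof (rule pm_step_remove_edge[OF ab])
    show "sat V \<psi> = sat V \<chi> - {a, b}"
      unfolding sat_\<chi> \<psi> using \<open>a \<noteq> c\<close> b cube_edge_neq[OF ab] cube_edge_neq[OF bc] by auto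
  qed (simp_all add: sat_\<chi> a)
  ultimately show ?thesis
    by (meson r_into_rtranclp rtranclp.rtrancl_into_rtrancl)
qed

lemma equiv_bf_swap_along_path:
  assumes "successively (cube_edge V) (a # xs @ [b])" "distinct (a # xs @ [b])" "odd (length xs)"
    and "a \<in> sat V \<phi>" "b \<notin> sat V \<phi>" "set xs \<inter> sat V \<phi> = {}"
    and "sat V \<psi> = sat V \<phi> - {a} \<union> {b}"
  shows "equiv_bf V \<phi> \<psi>"
  using assms
proof (induction xs arbitrary: a \<phi> rule: induct_list012)
  case (2 c)
  then have "cube_edge V a c" "cube_edge V c b" "a \<noteq> b" "c \<notin> sat V \<phi>"
    by auto
  with "2.prems"(4,5,7) show ?case
    by (intro equiv_bf_shift_two_edges)
next
  case (3 c d ys)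
  define \<chi> where "\<chi> \<mu> \<longleftrightarrow> \<mu> \<in> sat V \<phi> - {a} \<union> {d}" for \<mu>
  have edges: "cube_edge V a c" "cube_edge V c d" "successively (cube_edge V) (d # ys @ [b])"
    using "3.prems"(1) by simp_all
  have dist: "a \<noteq> d" "distinct (d # ys @ [b])" "a \<notin> set ys" "a \<noteq> b" "d \<notin> set ys"
    using "3.prems"(2) by auto
  have unsat: "c \<notin> sat V \<phi>" "d \<notin> sat V \<phi>" "set ys \<inter> sat V \<phi> = {}"
    using "3.prems"(6) by auto
  have sat_\<chi>: "sat V \<chi> = sat V \<phi> - {a} \<union> {d}"
    unfolding \<chi>_def using sat_subset_Pow[of V \<phi>] cube_edge_subset(2)[OF edges(2)] by (intro sat_mem) auto
  have "equiv_bf V \<phi> \<chi>"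
    using dist(1) "3.prems"(4) unsat(1,2) sat_\<chi> by (intro equiv_bf_shift_two_edges[OF edges(1,2)])
  moreover have "equiv_bf V \<chi> \<psi>"
  proof (rule "3.IH"(1)[OF edges(3) dist(2)])
    show "odd (length ys)" "d \<in> sat V \<chi>"
      using "3.prems"(3) sat_\<chi> by simp_all
    show "b \<notin> sat V \<chi>" "set ys \<inter> sat V \<chi> = {}"
      using "3.prems"(5) dist unsat(3) sat_\<chi> by auto
    show "sat V \<psi> = sat V \<chi> - {d} \<union> {b}"
      using "3.prems"(7) unsat(2) sat_\<chi> by auto
  qed
  ultimately show ?case
    by (rule rtranclp_trans)
qed simp

lemma equiv_bf_kill_along_path:
  assumes path: "successively (cube_edge V) (a # xs @ [b])" and dist: "distinct (a # xs @ [b])"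
    and "even (length xs)" "a \<in> sat V \<phi>" "b \<in> sat V \<phi>" "set xs \<inter> sat V \<phi> = {}"
    and \<psi>: "sat V \<psi> = sat V \<phi> - {a, b}"
  shows "equiv_bf V \<phi> \<psi>"
proof (cases xs rule: rev_cases)
  case Nil
  then show ?thesis
    using assms by (auto intro: pm_step_remove_edge)
next
  case (snoc ys c)
  define \<chi> where "\<chi> \<mu> \<longleftrightarrow> \<mu> \<in> sat V \<phi> - {a} \<union> {c}" for \<mu>
  have "successively (cube_edge V) ((a # ys @ [c]) @ [b])"
    using path unfolding snoc by simp
  then have edges: "successively (cube_edge V) (a # ys @ [c])" "cube_edge V c b"
    unfolding successively_append_iff by simp_all
  have sat_\<chi>: "sat V \<chi> = sat V \<phi> - {a} \<union> {c}"
    unfolding \<chi>_def using sat_subset_Pow cube_edge_subset(1)[OF edges(2)] by (intro sat_mem) blast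
  have "equiv_bf V \<phi> \<chi>"
    using assms sat_\<chi> unfolding snoc by (intro equiv_bf_swap_along_path[OF edges(1)]) auto
  moreover have "pm_step V \<chi> \<psi>"
    using assms sat_\<chi> unfolding snoc by (intro pm_step_remove_edge[OF edges(2)]) auto
  ultimately show ?thesis
    by (meson rtranclp.rtrancl_into_rtrancl)
qed

theorem lemma5p10:
  fixes k n :: nat and \<phi> :: "nat set \<Rightarrow> bool" and \<nu> \<nu>' :: "nat set" and p :: "nat set list"
  assumes "k \<ge> 1"
    and "\<nu> \<noteq> \<nu>'"
    and "simple_path {0..k} p" and "length p = n + 2"
    and "p ! 0 = \<nu>" and "p ! (n + 1) = \<nu>'"
    and "\<forall>i. 1 \<le> i \<and> i \<le> n \<longrightarrow> p ! i \<notin> sat {0..k} \<phi>"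
  shows "((-1::int) ^ card \<nu> \<noteq> (-1) ^ card \<nu>' \<and> {\<nu>, \<nu>'} \<subseteq> sat {0..k} \<phi> \<longrightarrow>
            equiv_bf {0..k} \<phi> (\<lambda>\<mu>. \<mu> \<in> sat {0..k} \<phi> - {\<nu>, \<nu>'}))
       \<and> ((-1::int) ^ card \<nu> = (-1) ^ card \<nu>' \<and> \<nu> \<in> sat {0..k} \<phi> \<and> \<nu>' \<notin> sat {0..k} \<phi> \<longrightarrow>
            equiv_bf {0..k} \<phi> (\<lambda>\<mu>. \<mu> \<in> (sat {0..k} \<phi> - {\<nu>}) \<union> {\<nu>'}))"
proof -
  let ?V = "{0..k}" and ?S = "sat {0..k} \<phi>"
  define xs where "xs = take n (tl p)"
  have p: "p = \<nu> # xs @ [\<nu>']"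
    using list_eq_hd_take_tl_last[OF assms(4)] assms(5,6) unfolding xs_def by simp
  have path: "successively (cube_edge ?V) (\<nu> # xs @ [\<nu>'])" and dist: "distinct (\<nu> # xs @ [\<nu>'])"
    using assms(3) unfolding simple_path_iff p by simp_all
  have len: "length xs = n"
    using assms(4) p by simp
  have unsat: "set xs \<inter> ?S = {}"
    using assms(4,7) unfolding xs_def by (fastforce simp: in_set_conv_nth nth_tl)
  have parity: "(-1::int) ^ card \<nu> = (-1) ^ card \<nu>' \<longleftrightarrow> odd n"
    using neg_one_power_card_path_ends[OF path] len by simp
  show ?thesis
  proof (intro conjI impI)
    assume "(-1::int) ^ card \<nu> \<noteq> (-1) ^ card \<nu>' \<and> {\<nu>, \<nu>'} \<subseteq> ?S"
    then show "equiv_bf ?V \<phi> (\<lambda>\<mu>. \<mu> \<in> ?S - {\<nu>, \<nu>'})"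
      using parity len unsat sat_subset_Pow[of ?V \<phi>]
      by (intro equiv_bf_kill_along_path[OF path dist] sat_mem) auto
  next
    assume "(-1::int) ^ card \<nu> = (-1) ^ card \<nu>' \<and> \<nu> \<in> ?S \<and> \<nu>' \<notin> ?S"
    then show "equiv_bf ?V \<phi> (\<lambda>\<mu>. \<mu> \<in> (?S - {\<nu>}) \<union> {\<nu>'})"
      using parity len unsat sat_subset_Pow[of ?V \<phi>] path_last_subset[OF path]
      by (intro equiv_bf_swap_along_path[OF path dist] sat_mem) auto
  qed
qed

end
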